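(* Let $E$ be a (real, Hausdorff) locally convex space and let $B\subseteq E$ be a bounded subset. Then $B$ is tame in $E$ if and only if $B$ contains no bounded $l^1$-sequence. Consequently, a locally convex space $E$ is tame if and only if $E$ contains no bounded $l^1$-sequence.
   Context: For a locally convex space $E$, $E^*$ denotes its topological dual and ${\rm eqc}(E^* )$ the family of all equicontinuous, weak-star compact subsets of $E^*$. A sequence of real functions $(f_n)_{n\in\mathbb N}$ on a set $X$ is independent if there are reals $a<b$ such that $\bigcap_{n\in P} f_n^{-1}(-\infty,a)\cap\bigcap_{n\in M} f_n^{-1}(b,\infty)\neq\emptyset$ for all finite disjoint $P,M\subseteq\mathbb N$. A bounded family of real functions on $X$ is tame if it contains no independent sequence. A bounded subset $B\subseteq E$ is tame (in $E$) if for every $K\in{\rm eqc}(E^* )$ the family of functions $\{K\to\mathbb R,\ \varphi\mapsto\varphi(b)\}_{b\in B}$ is a tame family on $K$. $E$ is tame if every bounded subset of $E$ is tame. A bounded sequence $(x_n)$ in $E$ is an $l^1$-sequence (equivalent to the $l^1$-basis) if there exist a continuous seminorm $\rho$ on $E$ and $\delta>0$ such that $\delta\sum_{i=1}^n|c_i|\le\rho(\sum_{i=1}^n c_ix_i)$ for all $n$ and all reals $c_1,\dots,c_n$. *)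

theory Defs
  imports "HOL-Analysis.Analysis"
begin

definition locally_convex_space :: "'a::{real_vector,t2_space} itself \<Rightarrow> bool" where
  "locally_convex_space _ \<longleftrightarrow>
     continuous_on UNIV (\<lambda>p::'a \<times> 'a. fst p + snd p) \<and>
     continuous_on UNIV (\<lambda>p::real \<times> 'a. fst p *\<^sub>R snd p) \<and>
     (\<forall>U::'a set. open U \<and> 0 \<in> U \<longrightarrow> (\<exists>V. open V \<and> 0 \<in> V \<and> convex V \<and> V \<subseteq> U))"

definition tvs_bounded :: "'a::{real_vector,topological_space} set \<Rightarrow> bool" where
  "tvs_bounded B \<longleftrightarrow>
     (\<forall>U. open U \<and> 0 \<in> U \<longrightarrow> (\<exists>s>0. \<forall>t. t > s \<longrightarrow> B \<subseteq> (\<lambda>x. t *\<^sub>R x) ` U))"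

definition top_dual :: "('a::{real_vector,topological_space} \<Rightarrow> real) set" where
  "top_dual = {\<phi>. linear \<phi> \<and> continuous_on UNIV \<phi>}"

definition equicontinuous_family :: "('a::topological_space \<Rightarrow> real) set \<Rightarrow> bool" where
  "equicontinuous_family K \<longleftrightarrow>
     (\<forall>x \<epsilon>. \<epsilon> > 0 \<longrightarrow> (\<exists>U. open U \<and> x \<in> U \<and> (\<forall>\<phi>\<in>K. \<forall>y\<in>U. \<bar>\<phi> y - \<phi> x\<bar> < \<epsilon>)))"

text \<open>The weak-star topology on
E* is the topology of pointwise convergence, i.e. the subspace topology of the product
topology on 'a \<Rightarrow> real.\<close>
definition eqc :: "('a::{real_vector,topological_space} \<Rightarrow> real) set set" where
  "eqc = {K. K \<subseteq> top_dual \<and> equicontinuous_family K \<and>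
              compactin (product_topology (\<lambda>_. euclideanreal) UNIV) K}"

definition independent_seq :: "'x set \<Rightarrow> (nat \<Rightarrow> 'x \<Rightarrow> real) \<Rightarrow> bool" where
  "independent_seq X f \<longleftrightarrow>
     (\<exists>a b. a < b \<and> (\<forall>P M. finite P \<and> finite M \<and> P \<inter> M = {} \<longrightarrow>
        (\<exists>x\<in>X. (\<forall>n\<in>P. f n x < a) \<and> (\<forall>n\<in>M. f n x > b))))"

definition tame_family :: "'x set \<Rightarrow> ('x \<Rightarrow> real) set \<Rightarrow> bool" where
  "tame_family X F \<longleftrightarrow> \<not> (\<exists>f. range f \<subseteq> F \<and> independent_seq X f)"

definition tame_subset :: "'a::{real_vector,topological_space} set \<Rightarrow> bool" where
  "tame_subset B \<longleftrightarrow>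
     tvs_bounded B \<and> (\<forall>K\<in>eqc. tame_family K ((\<lambda>b. \<lambda>\<phi>::'a \<Rightarrow> real. \<phi> b) ` B))"

definition tame_space :: "'a::{real_vector,topological_space} itself \<Rightarrow> bool" where
  "tame_space _ \<longleftrightarrow> (\<forall>B::'a set. tvs_bounded B \<longrightarrow> tame_subset B)"

definition is_seminorm :: "('a::real_vector \<Rightarrow> real) \<Rightarrow> bool" where
  "is_seminorm \<rho> \<longleftrightarrow> (\<forall>x y. \<rho> (x + y) \<le> \<rho> x + \<rho> y) \<and> (\<forall>c x. \<rho> (c *\<^sub>R x) = \<bar>c\<bar> * \<rho> x)"

text \<open>Bounded l^1-sequence (equivalent to the l^1 basis).\<close>
definition l1_sequence :: "(nat \<Rightarrow> 'a::{real_vector,topological_space}) \<Rightarrow> bool" where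
  "l1_sequence x \<longleftrightarrow> tvs_bounded (range x) \<and>
     (\<exists>\<rho> \<delta>. is_seminorm \<rho> \<and> continuous_on UNIV \<rho> \<and> \<delta> > 0 \<and>
        (\<forall>n c. \<delta> * (\<Sum>i<n. \<bar>c i\<bar>) \<le> \<rho> (\<Sum>i<n. c i *\<^sub>R x i)))"

end

theory Submission
  imports Defs
begin

text \<open>Both directions pass through the \<open>l\<^sup>1\<close> estimate \<open>\<delta> \<Sum>|c\<^sub>i| \<le> \<rho> (\<Sum> c\<^sub>i x\<^sub>i)\<close>. An
independent sequence of evaluations \<open>\<phi> \<mapsto> \<phi> x\<^sub>n\<close> on some \<open>K \<in> eqc\<close> yields this estimate for
\<open>\<rho> v = sup\<^sub>\<phi>\<^sub>\<in>\<^sub>K |\<phi> v|\<close>, a seminorm which is continuous because \<open>K\<close> is equicontinuous.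
Conversely, given the estimate for a continuous seminorm \<open>\<rho>\<close>, Hahn--Banach realises every sign
pattern on \<open>x\<^sub>0, \<dots>, x\<^sub>N\<^sub>-\<^sub>1\<close> by a functional in the polar \<open>{\<phi> linear. |\<phi>| \<le> \<rho>}\<close>, and this
polar is equicontinuous and weak-star compact (Alaoglu), so the evaluations are independent on it.\<close>

section \<open>Hahn--Banach for seminorms\<close>

lemma seminorm_zero: "is_seminorm \<rho> \<Longrightarrow> \<rho> 0 = 0"
  unfolding is_seminorm_def by (metis abs_zero mult_zero_left scale_zero_left)

lemma seminorm_minus: "is_seminorm \<rho> \<Longrightarrow> \<rho> (- x) = \<rho> x"
  unfolding is_seminorm_def by (metis abs_minus_cancel abs_one mult_1 scaleR_minus1_left)

lemma seminorm_triangle: "is_seminorm \<rho> \<Longrightarrow> \<rho> (x + y) \<le> \<rho> x + \<rho> y"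
  unfolding is_seminorm_def by blast

lemma seminorm_scaleR: "is_seminorm \<rho> \<Longrightarrow> \<rho> (c *\<^sub>R x) = \<bar>c\<bar> * \<rho> x"
  unfolding is_seminorm_def by blast

text \<open>Hahn--Banach is proved for graphs: a partial linear functional dominated by \<open>\<rho>\<close> is a
linear subspace \<open>G\<close> of \<open>'a \<times> real\<close> with \<open>a \<le> \<rho> x\<close> for \<open>(x, a) \<in> G\<close>. For a seminorm this
forces \<open>G\<close> to be the graph of a function, and Zorn's lemma applies to inclusion of sets.\<close>

definition dominated_graph :: "('a::real_vector \<Rightarrow> real) \<Rightarrow> ('a \<times> real) set \<Rightarrow> bool" where
  "dominated_graph \<rho> G \<longleftrightarrow> G \<noteq> {} \<and> (\<forall>p\<in>G. \<forall>q\<in>G. (fst p + fst q, snd p + snd q) \<in> G) \<and>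
     (\<forall>p\<in>G. \<forall>c. (c *\<^sub>R fst p, c * snd p) \<in> G) \<and> (\<forall>p\<in>G. snd p \<le> \<rho> (fst p))"

lemma dominated_graph_add: "dominated_graph \<rho> G \<Longrightarrow> (x, a) \<in> G \<Longrightarrow> (y, b) \<in> G \<Longrightarrow> (x + y, a + b) \<in> G"
  unfolding dominated_graph_def by force

lemma dominated_graph_scaleR: "dominated_graph \<rho> G \<Longrightarrow> (x, a) \<in> G \<Longrightarrow> (c *\<^sub>R x, c * a) \<in> G"
  unfolding dominated_graph_def by force

lemma dominated_graph_le: "dominated_graph \<rho> G \<Longrightarrow> (x, a) \<in> G \<Longrightarrow> a \<le> \<rho> x"
  unfolding dominated_graph_def by force

lemma dominated_graph_zero:
  assumes "dominated_graph \<rho> G"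
  shows "(0, 0) \<in> G"
proof -
  obtain x a where "(x, a) \<in> G" using assms unfolding dominated_graph_def by auto
  from dominated_graph_scaleR[OF assms this, of 0] show ?thesis by simp
qed

lemma dominated_graph_abs_le:
  assumes "is_seminorm \<rho>" "dominated_graph \<rho> G" "(x, a) \<in> G"
  shows "\<bar>a\<bar> \<le> \<rho> x"
proof -
  have "(-1 *\<^sub>R x, -1 * a) \<in> G" using dominated_graph_scaleR assms by blast
  hence "- a \<le> \<rho> (- x)" using dominated_graph_le assms by fastforce
  thus ?thesis using seminorm_minus[OF assms(1)] dominated_graph_le[OF assms(2,3)] by auto
qed

lemma dominated_graph_unique:
  assumes "is_seminorm \<rho>" "dominated_graph \<rho> G" "(x, a) \<in> G" "(x, b) \<in> G"
  shows "a = b"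
proof -
  have "(-1 *\<^sub>R x, -1 * b) \<in> G" using dominated_graph_scaleR assms by blast
  hence "(x + -1 *\<^sub>R x, a + -1 * b) \<in> G" using dominated_graph_add assms by blast
  hence "\<bar>a - b\<bar> \<le> \<rho> 0" using dominated_graph_abs_le[OF assms(1,2)] by fastforce
  thus ?thesis using seminorm_zero[OF assms(1)] by simp
qed

lemma dominated_graph_extension_value:
  assumes s: "is_seminorm \<rho>" and g: "dominated_graph \<rho> G"
  obtains c where "\<And>y a. (y, a) \<in> G \<Longrightarrow> a - \<rho> (y - x0) \<le> c"
    and "\<And>y a. (y, a) \<in> G \<Longrightarrow> c \<le> \<rho> (y + x0) - a"
proof -
  define S where "S = (\<lambda>p. snd p - \<rho> (fst p - x0)) ` G"
  have S_le: "s \<le> \<rho> (v + x0) - b" if "s \<in> S" "(v, b) \<in> G" for s v b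
  proof -
    obtain y a where ya: "(y, a) \<in> G" "s = a - \<rho> (y - x0)" using \<open>s \<in> S\<close> unfolding S_def by auto
    have "a + b \<le> \<rho> ((y - x0) + (v + x0))"
      using dominated_graph_le[OF g dominated_graph_add[OF g ya(1) that(2)]] by (simp add: algebra_simps)
    also have "\<dots> \<le> \<rho> (y - x0) + \<rho> (v + x0)" using seminorm_triangle[OF s] .
    finally show ?thesis using ya by simp
  qed
  have nonempty: "S \<noteq> {}" using g unfolding S_def dominated_graph_def by auto
  have bdd: "bdd_above S" using S_le dominated_graph_zero[OF g] unfolding bdd_above_def by blast
  show ?thesis
  proof (rule that)
    show "a - \<rho> (y - x0) \<le> Sup S" if "(y, a) \<in> G" for y a
      by (rule cSup_upper[OF _ bdd]) (use that in \<open>force simp: S_def\<close>)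
    show "Sup S \<le> \<rho> (y + x0) - a" if "(y, a) \<in> G" for y a
      by (rule cSup_least[OF nonempty]) (use S_le that in blast)
  qed
qed

lemma dominated_graph_extend:
  assumes s: "is_seminorm \<rho>" and g: "dominated_graph \<rho> G"
    and c1: "\<And>y a. (y, a) \<in> G \<Longrightarrow> a - \<rho> (y - x0) \<le> c"
    and c2: "\<And>y a. (y, a) \<in> G \<Longrightarrow> c \<le> \<rho> (y + x0) - a"
  shows "dominated_graph \<rho> {(y + t *\<^sub>R x0, a + t * c) | y a t. (y, a) \<in> G}"
    (is "dominated_graph \<rho> ?G'")
proof -
  have le: "a + t * c \<le> \<rho> (y + t *\<^sub>R x0)" if "(y, a) \<in> G" for y a t
  proof (cases t "0::real" rule: linorder_cases)
    case less
    have "(1/(-t)) * a - \<rho> ((1/(-t)) *\<^sub>R y - x0) \<le> c"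
      using c1[OF dominated_graph_scaleR[OF g that, of "1/(-t)"]] .
    hence "-t * ((1/(-t)) * a - \<rho> ((1/(-t)) *\<^sub>R y - x0)) \<le> -t * c"
      using less by (intro mult_left_mono) auto
    moreover have "(-t) *\<^sub>R ((1/(-t)) *\<^sub>R y - x0) = y + t *\<^sub>R x0"
      using less by (simp add: algebra_simps)
    hence "-t * \<rho> ((1/(-t)) *\<^sub>R y - x0) = \<rho> (y + t *\<^sub>R x0)"
      using seminorm_scaleR[OF s, of "-t" "(1/(-t)) *\<^sub>R y - x0"] less by simp
    ultimately show ?thesis using less by (simp add: right_diff_distrib)
  next
    case equal
    thus ?thesis using dominated_graph_le[OF g that] by simp
  next
    case greater
    have "c \<le> \<rho> ((1/t) *\<^sub>R y + x0) - (1/t) * a"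
      using c2[OF dominated_graph_scaleR[OF g that, of "1/t"]] .
    hence "t * c \<le> t * (\<rho> ((1/t) *\<^sub>R y + x0) - (1/t) * a)"
      using greater by (intro mult_left_mono) auto
    moreover have "t *\<^sub>R ((1/t) *\<^sub>R y + x0) = y + t *\<^sub>R x0"
      using greater by (simp add: algebra_simps)
    hence "t * \<rho> ((1/t) *\<^sub>R y + x0) = \<rho> (y + t *\<^sub>R x0)"
      using seminorm_scaleR[OF s, of t "(1/t) *\<^sub>R y + x0"] greater by simp
    ultimately show ?thesis using greater by (simp add: right_diff_distrib)
  qed
  have mem: "(y + t *\<^sub>R x0, a + t * c) \<in> ?G'" if "(y, a) \<in> G" for y a t
    using that by blast
  show ?thesis
    unfolding dominated_graph_def
  proof (intro conjI ballI allI)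
    show "?G' \<noteq> {}" using dominated_graph_zero[OF g] by blast
  next
    fix p q assume "p \<in> ?G'" "q \<in> ?G'"
    then obtain y a t y' a' t' where "p = (y + t *\<^sub>R x0, a + t * c)" "(y, a) \<in> G"
      "q = (y' + t' *\<^sub>R x0, a' + t' * c)" "(y', a') \<in> G" by blast
    moreover have "((y + y') + (t + t') *\<^sub>R x0, (a + a') + (t + t') * c) \<in> ?G'"
      using mem[OF dominated_graph_add[OF g]] calculation by blast
    ultimately show "(fst p + fst q, snd p + snd q) \<in> ?G'"
      by (simp add: algebra_simps)
  next
    fix p r assume "p \<in> ?G'"
    then obtain y a t where "p = (y + t *\<^sub>R x0, a + t * c)" "(y, a) \<in> G" by blast
    moreover have "(r *\<^sub>R y + (r * t) *\<^sub>R x0, r * a + (r * t) * c) \<in> ?G'"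
      using mem[OF dominated_graph_scaleR[OF g]] calculation by blast
    ultimately show "(r *\<^sub>R fst p, r * snd p) \<in> ?G'"
      by (simp add: algebra_simps)
  next
    fix p assume "p \<in> ?G'"
    then show "snd p \<le> \<rho> (fst p)" using le by auto
  qed
qed

lemma dominated_graph_Union_chain:
  assumes "C \<noteq> {}" "subset.chain {G. dominated_graph \<rho> G} C"
  shows "dominated_graph \<rho> (\<Union>C)"
proof -
  have gC: "\<And>X. X \<in> C \<Longrightarrow> dominated_graph \<rho> X"
    and ch: "\<And>X Y. X \<in> C \<Longrightarrow> Y \<in> C \<Longrightarrow> X \<subseteq> Y \<or> Y \<subseteq> X"
    using assms(2) unfolding subset.chain_def by auto
  show ?thesis
    unfolding dominated_graph_def
  proof (intro conjI ballI allI)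
    show "\<Union>C \<noteq> {}" using assms(1) gC unfolding dominated_graph_def by blast
  next
    fix p q assume "p \<in> \<Union>C" "q \<in> \<Union>C"
    then obtain X Y where XY: "X \<in> C" "Y \<in> C" "p \<in> X" "q \<in> Y" by blast
    with ch[OF XY(1,2)] gC show "(fst p + fst q, snd p + snd q) \<in> \<Union>C"
      unfolding dominated_graph_def by blast
  next
    fix p c assume "p \<in> \<Union>C"
    thus "(c *\<^sub>R fst p, c * snd p) \<in> \<Union>C" using gC unfolding dominated_graph_def by blast
  next
    fix p assume "p \<in> \<Union>C"
    thus "snd p \<le> \<rho> (fst p)" using gC unfolding dominated_graph_def by blast
  qed
qed

lemma hahn_banach_dominated_graph:
  assumes s: "is_seminorm \<rho>" and g0: "dominated_graph \<rho> G0"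
  obtains \<phi> where "linear \<phi>" "\<And>v. \<bar>\<phi> v\<bar> \<le> \<rho> v" "\<And>x a. (x, a) \<in> G0 \<Longrightarrow> \<phi> x = a"
proof -
  define A where "A = {G. dominated_graph \<rho> G \<and> G0 \<subseteq> G}"
  have "\<exists>M\<in>A. \<forall>X\<in>A. M \<subseteq> X \<longrightarrow> X = M"
  proof (rule subset_Zorn_nonempty)
    show "A \<noteq> {}" using g0 unfolding A_def by blast
  next
    fix C assume C: "C \<noteq> {}" "subset.chain A C"
    have "subset.chain {G. dominated_graph \<rho> G} C"
      using C(2) unfolding A_def subset.chain_def by blast
    hence "dominated_graph \<rho> (\<Union>C)" by (rule dominated_graph_Union_chain[OF C(1)])
    moreover have "G0 \<subseteq> \<Union>C" using C unfolding A_def subset.chain_def by blast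
    ultimately show "\<Union>C \<in> A" unfolding A_def by blast
  qed
  then obtain M where "M \<in> A" and M_max: "\<forall>X\<in>A. M \<subseteq> X \<longrightarrow> X = M" ..
  then have gM: "dominated_graph \<rho> M" and G0M: "G0 \<subseteq> M" unfolding A_def by auto
  have max: "X = M" if "dominated_graph \<rho> X" "M \<subseteq> X" for X
    using M_max that G0M unfolding A_def by blast
  have total: "\<exists>a. (x, a) \<in> M" for x
  proof (rule ccontr)
    assume x: "\<nexists>a. (x, a) \<in> M"
    obtain c where "\<And>y a. (y, a) \<in> M \<Longrightarrow> a - \<rho> (y - x) \<le> c" "\<And>y a. (y, a) \<in> M \<Longrightarrow> c \<le> \<rho> (y + x) - a"
      using dominated_graph_extension_value[OF s gM] by blast
    from dominated_graph_extend[OF s gM this]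
    have "{(y + t *\<^sub>R x, a + t * c) | y a t. (y, a) \<in> M} = M"
    proof (rule max)
      show "M \<subseteq> {(y + t *\<^sub>R x, a + t * c) | y a t. (y, a) \<in> M}"
        by (force intro: exI[of _ 0])
    qed
    moreover have "(x, c) \<in> {(y + t *\<^sub>R x, a + t * c) | y a t. (y, a) \<in> M}"
      using dominated_graph_zero[OF gM] by force
    ultimately show False using x by blast
  qed
  define \<phi> where "\<phi> x = (THE a. (x, a) \<in> M)" for x
  have graph: "(x, \<phi> x) \<in> M" for x
    unfolding \<phi>_def by (rule theI') (use total dominated_graph_unique[OF s gM] in blast)
  have eq: "\<phi> x = a" if "(x, a) \<in> M" for x a
    using dominated_graph_unique[OF s gM graph that] .
  have "linear \<phi>"
  proof (rule linearI)
    show "\<phi> (x + y) = \<phi> x + \<phi> y" for x y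
      using eq[OF dominated_graph_add[OF gM graph graph]] .
    show "\<phi> (r *\<^sub>R x) = r *\<^sub>R \<phi> x" for r x
      using eq[OF dominated_graph_scaleR[OF gM graph]] by simp
  qed
  moreover have "\<bar>\<phi> v\<bar> \<le> \<rho> v" for v
    using dominated_graph_abs_le[OF s gM graph] .
  moreover have "\<phi> x = a" if "(x, a) \<in> G0" for x a
    using eq G0M that by blast
  ultimately show ?thesis by (rule that)
qed

section \<open>Equicontinuous sets of functionals and their seminorms\<close>

lemma continuous_on_UNIV_iff_real:
  fixes f :: "'a::topological_space \<Rightarrow> real"
  shows "continuous_on UNIV f \<longleftrightarrow>
    (\<forall>x \<epsilon>. \<epsilon> > 0 \<longrightarrow> (\<exists>U. open U \<and> x \<in> U \<and> (\<forall>y\<in>U. \<bar>f y - f x\<bar> < \<epsilon>)))"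
proof
  assume f: "continuous_on UNIV f"
  show "\<forall>x \<epsilon>. \<epsilon> > 0 \<longrightarrow> (\<exists>U. open U \<and> x \<in> U \<and> (\<forall>y\<in>U. \<bar>f y - f x\<bar> < \<epsilon>))"
  proof (intro allI impI)
    fix x and \<epsilon> :: real assume "\<epsilon> > 0"
    moreover have "open (f -` {f x - \<epsilon> <..< f x + \<epsilon>})" by (rule open_vimage[OF _ f]) simp
    ultimately show "\<exists>U. open U \<and> x \<in> U \<and> (\<forall>y\<in>U. \<bar>f y - f x\<bar> < \<epsilon>)"
      by (intro exI[of _ "f -` {f x - \<epsilon> <..< f x + \<epsilon>}"]) (auto simp: abs_diff_less_iff)
  qed
next
  assume H: "\<forall>x \<epsilon>. \<epsilon> > 0 \<longrightarrow> (\<exists>U. open U \<and> x \<in> U \<and> (\<forall>y\<in>U. \<bar>f y - f x\<bar> < \<epsilon>))"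
  show "continuous_on UNIV f"
    unfolding continuous_on_topological
  proof (intro ballI allI impI)
    fix x B assume "open B" "f x \<in> B"
    then obtain e where e: "e > 0" "\<And>z. \<bar>z - f x\<bar> < e \<Longrightarrow> z \<in> B" unfolding open_real by blast
    with H obtain U where "open U" "x \<in> U" "\<forall>y\<in>U. \<bar>f y - f x\<bar> < e" by blast
    with e show "\<exists>A. open A \<and> x \<in> A \<and> (\<forall>y\<in>UNIV. y \<in> A \<longrightarrow> f y \<in> B)" by blast
  qed
qed

lemma continuous_on_UNIV_realD:
  fixes f :: "'a::topological_space \<Rightarrow> real"
  assumes "continuous_on UNIV f" "\<epsilon> > 0"
  shows "\<exists>U. open U \<and> x \<in> U \<and> (\<forall>y\<in>U. \<bar>f y - f x\<bar> < \<epsilon>)"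
  using assms(1)[unfolded continuous_on_UNIV_iff_real, rule_format, OF assms(2)] .

lemma equicontinuous_familyD:
  assumes "equicontinuous_family K" "\<epsilon> > 0"
  shows "\<exists>U. open U \<and> x \<in> U \<and> (\<forall>\<phi>\<in>K. \<forall>y\<in>U. \<bar>\<phi> y - \<phi> x\<bar> < \<epsilon>)"
  using assms(1)[unfolded equicontinuous_family_def, rule_format, OF assms(2)] .

lemma equicontinuous_family_continuous_on:
  assumes "equicontinuous_family K" "\<phi> \<in> K"
  shows "continuous_on UNIV \<phi>"
  unfolding continuous_on_UNIV_iff_real
proof (intro allI impI)
  fix x and \<epsilon> :: real assume "\<epsilon> > 0"
  then obtain U where "open U" "x \<in> U" "\<forall>\<phi>\<in>K. \<forall>y\<in>U. \<bar>\<phi> y - \<phi> x\<bar> < \<epsilon>"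
    using equicontinuous_familyD[OF assms(1)] by blast
  with assms(2) show "\<exists>U. open U \<and> x \<in> U \<and> (\<forall>y\<in>U. \<bar>\<phi> y - \<phi> x\<bar> < \<epsilon>)" by blast
qed

lemma lcs_continuous_on_add_const:
  assumes "locally_convex_space TYPE('a::{real_vector,t2_space})"
  shows "continuous_on UNIV (\<lambda>y::'a. y + c)"
proof -
  have "continuous_on UNIV (\<lambda>p::'a \<times> 'a. fst p + snd p)"
    using assms unfolding locally_convex_space_def by blast
  from continuous_on_compose2[OF this continuous_on_Pair[OF continuous_on_id continuous_on_const]]
  show ?thesis by simp
qed

lemma lcs_continuous_on_scaleR_left:
  assumes "locally_convex_space TYPE('a::{real_vector,t2_space})"
  shows "continuous_on UNIV (\<lambda>t::real. t *\<^sub>R (v::'a))"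
proof -
  have "continuous_on UNIV (\<lambda>p::real \<times> 'a. fst p *\<^sub>R snd p)"
    using assms unfolding locally_convex_space_def by blast
  from continuous_on_compose2[OF this continuous_on_Pair[OF continuous_on_id continuous_on_const]]
  show ?thesis by simp
qed

definition seminorm_polar :: "('a::real_vector \<Rightarrow> real) \<Rightarrow> ('a \<Rightarrow> real) set" where
  "seminorm_polar \<rho> = {\<phi>. linear \<phi> \<and> (\<forall>v. \<bar>\<phi> v\<bar> \<le> \<rho> v)}"

lemma equicontinuous_family_seminorm_polar:
  assumes lcs: "locally_convex_space TYPE('a::{real_vector,t2_space})"
    and s: "is_seminorm \<rho>" and c: "continuous_on UNIV (\<rho>::'a \<Rightarrow> real)"
  shows "equicontinuous_family (seminorm_polar \<rho>)"
  unfolding equicontinuous_family_def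
proof (intro allI impI)
  fix x and \<epsilon> :: real assume "\<epsilon> > 0"
  have "continuous_on UNIV (\<lambda>y. \<rho> (y + - x))"
    by (rule continuous_on_compose2[OF c lcs_continuous_on_add_const[OF lcs]]) simp
  then obtain U where U: "open U" "x \<in> U" "\<forall>y\<in>U. \<bar>\<rho> (y + - x) - \<rho> (x + - x)\<bar> < \<epsilon>"
    using continuous_on_UNIV_realD \<open>\<epsilon> > 0\<close> by blast
  have "\<bar>\<phi> y - \<phi> x\<bar> < \<epsilon>" if "\<phi> \<in> seminorm_polar \<rho>" "y \<in> U" for \<phi> y
  proof -
    have "\<bar>\<phi> y - \<phi> x\<bar> = \<bar>\<phi> (y + - x)\<bar>"
      using that(1) linear_diff[of \<phi> y x] by (simp add: seminorm_polar_def)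
    also have "\<dots> \<le> \<rho> (y + - x)" using that(1) unfolding seminorm_polar_def by blast
    also have "\<dots> < \<epsilon>" using U(3) that(2) seminorm_zero[OF s] by (auto simp: abs_less_iff)
    finally show ?thesis .
  qed
  with U(1,2) show "\<exists>U. open U \<and> x \<in> U \<and> (\<forall>\<phi>\<in>seminorm_polar \<rho>. \<forall>y\<in>U. \<bar>\<phi> y - \<phi> x\<bar> < \<epsilon>)"
    by blast
qed

lemma closedin_seminorm_polar:
  "closedin (product_topology (\<lambda>_. euclideanreal) UNIV) (seminorm_polar \<rho>)"
proof -
  let ?T = "product_topology (\<lambda>_::'a. euclideanreal) UNIV"
  define L where "L v w r = {\<phi> \<in> topspace ?T. \<phi> (v + r *\<^sub>R w) - \<phi> v - r * \<phi> w \<in> {0}}" for v w r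
  define D where "D v = {\<phi> \<in> topspace ?T. \<phi> v \<in> {- \<rho> v .. \<rho> v}}" for v
  have "closedin ?T (L v w r)" for v w r
    unfolding L_def by (rule closedin_continuous_map_preimage) (auto intro!: continuous_intros)
  moreover have "closedin ?T (D v)" for v
    unfolding D_def by (rule closedin_continuous_map_preimage) (auto intro!: continuous_intros)
  moreover have "seminorm_polar \<rho> = (\<Inter>v. \<Inter>w. \<Inter>r. L v w r) \<inter> (\<Inter>v. D v)"
  proof (intro equalityI subsetI)
    fix \<phi> assume "\<phi> \<in> seminorm_polar \<rho>"
    then have "linear \<phi>" "\<And>v. \<bar>\<phi> v\<bar> \<le> \<rho> v" unfolding seminorm_polar_def by auto
    then show "\<phi> \<in> (\<Inter>v. \<Inter>w. \<Inter>r. L v w r) \<inter> (\<Inter>v. D v)"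
      by (simp add: L_def D_def linear_add linear_scale abs_le_iff minus_le_iff)
  next
    fix \<phi> assume \<phi>: "\<phi> \<in> (\<Inter>v. \<Inter>w. \<Inter>r. L v w r) \<inter> (\<Inter>v. D v)"
    then have L: "\<phi> \<in> L v w r" and D: "\<phi> \<in> D v" for v w r by auto
    have lin: "\<phi> (v + r *\<^sub>R w) = \<phi> v + r * \<phi> w" for v w r
      using L[of v w r] unfolding L_def by (simp add: algebra_simps)
    moreover have "\<bar>\<phi> v\<bar> \<le> \<rho> v" for v
      using D[of v] unfolding D_def by auto
    moreover have "linear \<phi>"
    proof (rule linearI)
      show "\<phi> (x + y) = \<phi> x + \<phi> y" for x y using lin[of x 1 y] by simp
      have "\<phi> 0 = 0" using lin[of 0 1 0] by simp
      then show "\<phi> (r *\<^sub>R x) = r *\<^sub>R \<phi> x" for r x using lin[of 0 r x] by simp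
    qed
    ultimately show "\<phi> \<in> seminorm_polar \<rho>" unfolding seminorm_polar_def by blast
  qed
  ultimately show ?thesis by (auto intro!: closedin_Int closedin_INT)
qed

text \<open>Alaoglu: the polar is a closed subset of the compact box \<open>\<Pi>\<^sub>v [-\<rho> v, \<rho> v]\<close>.\<close>
lemma compactin_seminorm_polar:
  "compactin (product_topology (\<lambda>_. euclideanreal) UNIV) (seminorm_polar \<rho>)"
proof (rule closed_compactin[OF _ _ closedin_seminorm_polar])
  show "compactin (product_topology (\<lambda>_. euclideanreal) UNIV) (PiE UNIV (\<lambda>v. {- \<rho> v .. \<rho> v}))"
    unfolding compactin_PiE by (auto simp: compactin_euclidean_iff)
  show "seminorm_polar \<rho> \<subseteq> PiE UNIV (\<lambda>v. {- \<rho> v .. \<rho> v})"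
    unfolding PiE_UNIV_domain
  proof (intro subsetI Pi_I)
    fix \<phi> v assume "\<phi> \<in> seminorm_polar \<rho>"
    then have "\<bar>\<phi> v\<bar> \<le> \<rho> v" unfolding seminorm_polar_def by blast
    then show "\<phi> v \<in> {- \<rho> v .. \<rho> v}" by (simp add: abs_le_iff)
  qed
qed

lemma seminorm_polar_in_eqc:
  assumes "locally_convex_space TYPE('a::{real_vector,t2_space})"
    and "is_seminorm \<rho>" and "continuous_on UNIV (\<rho>::'a \<Rightarrow> real)"
  shows "seminorm_polar \<rho> \<in> eqc"
proof -
  have equi: "equicontinuous_family (seminorm_polar \<rho>)"
    using equicontinuous_family_seminorm_polar[OF assms] .
  then have "seminorm_polar \<rho> \<subseteq> top_dual"
    using equicontinuous_family_continuous_on unfolding top_dual_def seminorm_polar_def by blast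
  with equi compactin_seminorm_polar show ?thesis unfolding eqc_def by blast
qed

text \<open>For \<open>K = {}\<close> this is the unspecified \<open>Sup {} :: real\<close>, hence the hypotheses \<open>K \<noteq> {}\<close> below.\<close>
definition sup_seminorm :: "('a \<Rightarrow> real) set \<Rightarrow> 'a \<Rightarrow> real" where
  "sup_seminorm K v = (SUP \<phi>\<in>K. \<bar>\<phi> v\<bar>)"

lemma sup_seminorm_least: "K \<noteq> {} \<Longrightarrow> (\<And>\<phi>. \<phi> \<in> K \<Longrightarrow> \<bar>\<phi> v\<bar> \<le> C) \<Longrightarrow> sup_seminorm K v \<le> C"
  unfolding sup_seminorm_def by (rule cSUP_least)

context
  fixes K :: "('a::{real_vector,t2_space} \<Rightarrow> real) set"
  assumes lcs: "locally_convex_space TYPE('a)"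
    and lin: "\<And>\<phi>. \<phi> \<in> K \<Longrightarrow> linear \<phi>"
    and equi: "equicontinuous_family K"
begin

lemma equicontinuous_linear_pointwise_bounded: "\<exists>C. \<forall>\<phi>\<in>K. \<bar>\<phi> v\<bar> \<le> C"
proof -
  obtain U where U: "open U" "0 \<in> U" "\<forall>\<phi>\<in>K. \<forall>y\<in>U. \<bar>\<phi> y - \<phi> 0\<bar> < 1"
    using equicontinuous_familyD[OF equi zero_less_one] by blast
  have "open ((\<lambda>t::real. t *\<^sub>R v) -` U)"
    by (rule open_vimage[OF U(1) lcs_continuous_on_scaleR_left[OF lcs]])
  moreover have "0 \<in> (\<lambda>t::real. t *\<^sub>R v) -` U" using U(2) by simp
  ultimately obtain e where e: "e > 0" "\<And>t. \<bar>t - 0\<bar> < e \<Longrightarrow> t *\<^sub>R v \<in> U"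
    unfolding open_real by blast
  have "\<bar>\<phi> v\<bar> \<le> 2 / e" if "\<phi> \<in> K" for \<phi>
  proof -
    have "\<bar>\<phi> ((e/2) *\<^sub>R v) - \<phi> 0\<bar> < 1" using U(3) that e by simp
    hence "(e/2) * \<bar>\<phi> v\<bar> < 1"
      using linear_scale[OF lin[OF that]] linear_0[OF lin[OF that]] e(1) by (simp add: abs_mult)
    thus ?thesis using e(1) by (simp add: field_simps)
  qed
  thus ?thesis by blast
qed

lemma abs_le_sup_seminorm: "\<phi> \<in> K \<Longrightarrow> \<bar>\<phi> v\<bar> \<le> sup_seminorm K v"
  unfolding sup_seminorm_def
  by (rule cSUP_upper) (use equicontinuous_linear_pointwise_bounded[of v] in \<open>auto intro: bdd_aboveI2\<close>)

lemma sup_seminorm_scaleR_le: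
  assumes "K \<noteq> {}"
  shows "sup_seminorm K (r *\<^sub>R v) \<le> \<bar>r\<bar> * sup_seminorm K v"
proof (rule sup_seminorm_least[OF assms])
  fix \<phi> assume "\<phi> \<in> K"
  then have "\<bar>\<phi> (r *\<^sub>R v)\<bar> = \<bar>r\<bar> * \<bar>\<phi> v\<bar>" using linear_scale[OF lin[OF \<open>\<phi> \<in> K\<close>]] by (simp add: abs_mult)
  also have "\<dots> \<le> \<bar>r\<bar> * sup_seminorm K v"
    using abs_le_sup_seminorm[OF \<open>\<phi> \<in> K\<close>] by (simp add: mult_left_mono)
  finally show "\<bar>\<phi> (r *\<^sub>R v)\<bar> \<le> \<bar>r\<bar> * sup_seminorm K v" .
qed

lemma is_seminorm_sup_seminorm:
  assumes "K \<noteq> {}"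
  shows "is_seminorm (sup_seminorm K)"
  unfolding is_seminorm_def
proof (intro conjI allI)
  show "sup_seminorm K (x + y) \<le> sup_seminorm K x + sup_seminorm K y" for x y
  proof (rule sup_seminorm_least[OF assms])
    fix \<phi> assume "\<phi> \<in> K"
    then show "\<bar>\<phi> (x + y)\<bar> \<le> sup_seminorm K x + sup_seminorm K y"
      using linear_add[OF lin] abs_le_sup_seminorm[of \<phi> x] abs_le_sup_seminorm[of \<phi> y] by fastforce
  qed
  show "sup_seminorm K (r *\<^sub>R x) = \<bar>r\<bar> * sup_seminorm K x" for r x
  proof (cases "r = 0")
    case True
    obtain \<phi> where "\<phi> \<in> K" using assms by blast
    with abs_le_sup_seminorm[of \<phi> 0] sup_seminorm_scaleR_le[OF assms, of 0 x] True
    show ?thesis by simp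
  next
    case False
    have "\<bar>r\<bar> * sup_seminorm K x = \<bar>r\<bar> * sup_seminorm K (inverse r *\<^sub>R (r *\<^sub>R x))"
      using False by simp
    also have "\<dots> \<le> \<bar>r\<bar> * (\<bar>inverse r\<bar> * sup_seminorm K (r *\<^sub>R x))"
      by (intro mult_left_mono sup_seminorm_scaleR_le[OF assms]) simp
    also have "\<dots> = sup_seminorm K (r *\<^sub>R x)" using False by (simp add: abs_inverse)
    finally show ?thesis using sup_seminorm_scaleR_le[OF assms, of r x] by linarith
  qed
qed

lemma continuous_on_sup_seminorm:
  assumes "K \<noteq> {}"
  shows "continuous_on UNIV (sup_seminorm K)"
  unfolding continuous_on_UNIV_iff_real
proof (intro allI impI)
  fix x and \<epsilon> :: real assume "\<epsilon> > 0"
  then obtain U where U: "open U" "x \<in> U" "\<forall>\<phi>\<in>K. \<forall>y\<in>U. \<bar>\<phi> y - \<phi> x\<bar> < \<epsilon>/2"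
    using equicontinuous_familyD[OF equi half_gt_zero] by blast
  have "\<bar>sup_seminorm K y - sup_seminorm K x\<bar> < \<epsilon>" if "y \<in> U" for y
  proof -
    have close: "\<bar>\<phi> y - \<phi> x\<bar> < \<epsilon>/2" if "\<phi> \<in> K" for \<phi>
      using U(3) \<open>y \<in> U\<close> that by blast
    have "sup_seminorm K y \<le> sup_seminorm K x + \<epsilon>/2"
    proof (rule sup_seminorm_least[OF assms])
      fix \<phi> assume "\<phi> \<in> K"
      then show "\<bar>\<phi> y\<bar> \<le> sup_seminorm K x + \<epsilon>/2"
        using close[OF \<open>\<phi> \<in> K\<close>] abs_le_sup_seminorm[OF \<open>\<phi> \<in> K\<close>, of x] by arith
    qed
    moreover have "sup_seminorm K x \<le> sup_seminorm K y + \<epsilon>/2"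
    proof (rule sup_seminorm_least[OF assms])
      fix \<phi> assume "\<phi> \<in> K"
      then show "\<bar>\<phi> x\<bar> \<le> sup_seminorm K y + \<epsilon>/2"
        using close[OF \<open>\<phi> \<in> K\<close>] abs_le_sup_seminorm[OF \<open>\<phi> \<in> K\<close>, of y] by arith
    qed
    ultimately show ?thesis using \<open>\<epsilon> > 0\<close> by linarith
  qed
  with U(1,2) show "\<exists>U. open U \<and> x \<in> U \<and> (\<forall>y\<in>U. \<bar>sup_seminorm K y - sup_seminorm K x\<bar> < \<epsilon>)"
    by blast
qed

end

section \<open>Independent evaluations and \<open>l\<^sup>1\<close> estimates\<close>

text \<open>Choosing \<open>\<phi>\<^sub>1\<close> below \<open>a\<close> where \<open>c\<^sub>i < 0\<close> and above \<open>b\<close> where \<open>c\<^sub>i > 0\<close>, and \<open>\<phi>\<^sub>2\<close> the other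
way round, gives \<open>(b - a) \<Sum>|c\<^sub>i| \<le> \<phi>\<^sub>1 v - \<phi>\<^sub>2 v \<le> 2 \<rho> v\<close> for \<open>v = \<Sum> c\<^sub>i x\<^sub>i\<close>.\<close>
lemma independent_seq_imp_l1_estimate:
  assumes K: "K \<subseteq> seminorm_polar \<rho>" and ind: "independent_seq K (\<lambda>n \<phi>. \<phi> (x n))"
  shows "\<exists>\<delta>>0. \<forall>n c. \<delta> * (\<Sum>i<n. \<bar>c i\<bar>) \<le> \<rho> (\<Sum>i<n. c i *\<^sub>R x i)"
proof -
  obtain a b where ab: "a < b" and sep0: "\<forall>P M. finite P \<and> finite M \<and> P \<inter> M = {} \<longrightarrow>
      (\<exists>\<phi>\<in>K. (\<forall>n\<in>P. \<phi> (x n) < a) \<and> (\<forall>n\<in>M. \<phi> (x n) > b))"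
    using ind unfolding independent_seq_def by (elim exE conjE) (rule that)
  have sep: "\<exists>\<phi>\<in>K. (\<forall>n\<in>P. \<phi> (x n) < a) \<and> (\<forall>n\<in>M. \<phi> (x n) > b)"
    if "finite P" "finite M" "P \<inter> M = {}" for P M
    using sep0 that by simp
  have "(b - a) / 2 * (\<Sum>i<n. \<bar>c i\<bar>) \<le> \<rho> (\<Sum>i<n. c i *\<^sub>R x i)" for n c
  proof -
    define P where "P = {i \<in> {..<n}. c i < 0}"
    define M where "M = {i \<in> {..<n}. c i > 0}"
    have fin: "finite P" "finite M" "P \<inter> M = {}" "M \<inter> P = {}" unfolding P_def M_def by auto
    obtain \<phi>\<^sub>1 where \<phi>\<^sub>1: "\<phi>\<^sub>1 \<in> K" "\<forall>i\<in>P. \<phi>\<^sub>1 (x i) < a" "\<forall>i\<in>M. \<phi>\<^sub>1 (x i) > b"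
      using sep[OF fin(1-3)] by blast
    obtain \<phi>\<^sub>2 where \<phi>\<^sub>2: "\<phi>\<^sub>2 \<in> K" "\<forall>i\<in>M. \<phi>\<^sub>2 (x i) < a" "\<forall>i\<in>P. \<phi>\<^sub>2 (x i) > b"
      using sep[OF fin(2,1,4)] by blast
    have lin: "linear \<phi>\<^sub>1" "linear \<phi>\<^sub>2" and bound: "\<bar>\<phi>\<^sub>1 v\<bar> \<le> \<rho> v" "\<bar>\<phi>\<^sub>2 v\<bar> \<le> \<rho> v" for v
      using K \<phi>\<^sub>1(1) \<phi>\<^sub>2(1) unfolding seminorm_polar_def by auto
    have termwise: "(b - a) * \<bar>c i\<bar> \<le> c i * (\<phi>\<^sub>1 (x i) - \<phi>\<^sub>2 (x i))" if "i < n" for i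
    proof (cases "c i" "0::real" rule: linorder_cases)
      case less
      with that \<phi>\<^sub>1 \<phi>\<^sub>2 have "b - a \<le> \<phi>\<^sub>2 (x i) - \<phi>\<^sub>1 (x i)" unfolding P_def by fastforce
      with less have "- c i * (b - a) \<le> - c i * (\<phi>\<^sub>2 (x i) - \<phi>\<^sub>1 (x i))"
        by (intro mult_left_mono) auto
      with less show ?thesis by (simp add: algebra_simps)
    next
      case greater
      with that \<phi>\<^sub>1 \<phi>\<^sub>2 have "b - a \<le> \<phi>\<^sub>1 (x i) - \<phi>\<^sub>2 (x i)" unfolding M_def by fastforce
      with greater have "c i * (b - a) \<le> c i * (\<phi>\<^sub>1 (x i) - \<phi>\<^sub>2 (x i))"
        by (intro mult_left_mono) auto
      with greater show ?thesis by (simp add: algebra_simps)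
    qed simp
    have "(b - a) * (\<Sum>i<n. \<bar>c i\<bar>) \<le> (\<Sum>i<n. c i * \<phi>\<^sub>1 (x i)) - (\<Sum>i<n. c i * \<phi>\<^sub>2 (x i))"
      using sum_mono[of "{..<n}", OF termwise]
      by (simp add: sum_distrib_left right_diff_distrib sum_subtractf)
    also have "\<dots> = \<phi>\<^sub>1 (\<Sum>i<n. c i *\<^sub>R x i) - \<phi>\<^sub>2 (\<Sum>i<n. c i *\<^sub>R x i)"
      by (simp add: linear_sum[OF lin(1)] linear_sum[OF lin(2)] linear_scale[OF lin(1)] linear_scale[OF lin(2)])
    also have "\<dots> \<le> 2 * \<rho> (\<Sum>i<n. c i *\<^sub>R x i)"
      using bound[of "\<Sum>i<n. c i *\<^sub>R x i"] by linarith
    finally show ?thesis by simp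
  qed
  with ab show ?thesis by (intro exI[of _ "(b - a) / 2"]) auto
qed

text \<open>Hahn--Banach, applied to the functional \<open>\<Sum> c\<^sub>i x\<^sub>i \<mapsto> \<delta> \<Sum> c\<^sub>i s\<^sub>i\<close> on the span of
\<open>x\<^sub>0, \<dots>, x\<^sub>N\<^sub>-\<^sub>1\<close>, which the \<open>l\<^sup>1\<close> estimate makes well defined and dominated by \<open>\<rho>\<close>.\<close>
lemma l1_estimate_sign_functional:
  fixes x :: "nat \<Rightarrow> 'a::real_vector"
  assumes s: "is_seminorm \<rho>" and "\<delta> > 0"
    and est: "\<And>n c. \<delta> * (\<Sum>i<n. \<bar>c i\<bar>) \<le> \<rho> (\<Sum>i<n. c i *\<^sub>R x i)"
    and sgn: "\<And>i. \<bar>s i\<bar> \<le> 1"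
  obtains \<phi> where "\<phi> \<in> seminorm_polar \<rho>" "\<And>j. j < N \<Longrightarrow> \<phi> (x j) = \<delta> * s j"
proof -
  define F where "F c = ((\<Sum>i<N. c i *\<^sub>R x i), \<delta> * (\<Sum>i<N. c i * s i))" for c
  have "dominated_graph \<rho> (range F)"
    unfolding dominated_graph_def
  proof (intro conjI ballI allI)
    fix p q assume "p \<in> range F" "q \<in> range F"
    then obtain c d where "p = F c" "q = F d" by blast
    then have "(fst p + fst q, snd p + snd q) = F (\<lambda>i. c i + d i)"
      unfolding F_def by (simp add: sum.distrib scaleR_add_left distrib_left distrib_right)
    then show "(fst p + fst q, snd p + snd q) \<in> range F" by simp
  next
    fix p and r :: real assume "p \<in> range F"
    then obtain c where "p = F c" by blast
    then have "(r *\<^sub>R fst p, r * snd p) = F (\<lambda>i. r * c i)"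
      unfolding F_def by (simp add: scaleR_sum_right sum_distrib_left mult.assoc mult.left_commute)
    then show "(r *\<^sub>R fst p, r * snd p) \<in> range F" by simp
  next
    fix p assume "p \<in> range F"
    then obtain c where p: "p = F c" by blast
    have "c i * s i \<le> \<bar>c i\<bar>" for i
    proof -
      have "c i * s i \<le> \<bar>c i\<bar> * \<bar>s i\<bar>" by (simp flip: abs_mult)
      also have "\<dots> \<le> \<bar>c i\<bar>" using sgn[of i] by (simp add: mult_left_le)
      finally show ?thesis .
    qed
    then have "(\<Sum>i<N. c i * s i) \<le> (\<Sum>i<N. \<bar>c i\<bar>)" by (intro sum_mono)
    then have "\<delta> * (\<Sum>i<N. c i * s i) \<le> \<delta> * (\<Sum>i<N. \<bar>c i\<bar>)" using \<open>\<delta> > 0\<close> by simp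
    also have "\<dots> \<le> \<rho> (\<Sum>i<N. c i *\<^sub>R x i)" by (rule est)
    finally show "snd p \<le> \<rho> (fst p)" unfolding p F_def by simp
  qed simp
  then obtain \<phi> where "linear \<phi>" "\<And>v. \<bar>\<phi> v\<bar> \<le> \<rho> v" and graph: "\<And>y a. (y, a) \<in> range F \<Longrightarrow> \<phi> y = a"
    using hahn_banach_dominated_graph[OF s] by blast
  then have "\<phi> \<in> seminorm_polar \<rho>" unfolding seminorm_polar_def by blast
  moreover have "\<phi> (x j) = \<delta> * s j" if "j < N" for j
  proof -
    have "F (\<lambda>i. if i = j then 1 else 0) = (x j, \<delta> * s j)"
      unfolding F_def using that by (simp add: if_distrib[of "\<lambda>t. t *\<^sub>R _"] if_distrib[of "\<lambda>t. t * _"] cong: if_cong)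
    then show ?thesis using graph by (metis rangeI)
  qed
  ultimately show ?thesis by (rule that)
qed

lemma l1_estimate_imp_independent_seq:
  assumes s: "is_seminorm \<rho>" and \<delta>: "\<delta> > 0"
    and est: "\<And>n c. \<delta> * (\<Sum>i<n. \<bar>c i\<bar>) \<le> \<rho> (\<Sum>i<n. c i *\<^sub>R x i)"
  shows "independent_seq (seminorm_polar \<rho>) (\<lambda>n \<phi>. \<phi> (x n))"
  unfolding independent_seq_def
proof (rule exI[of _ "- \<delta> / 2"], rule exI[of _ "\<delta> / 2"], intro conjI allI impI)
  show "- \<delta> / 2 < \<delta> / 2" using \<delta> by simp
  fix P M :: "nat set" assume PM: "finite P \<and> finite M \<and> P \<inter> M = {}"
  then obtain N where N: "P \<union> M \<subseteq> {..<N}" using finite_nat_bounded[of "P \<union> M"] by blast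
  define sg where "sg j = (if j \<in> P then -1 else if j \<in> M then 1 else (0::real))" for j
  have "\<bar>sg j\<bar> \<le> 1" for j by (simp add: sg_def)
  then obtain \<phi> where "\<phi> \<in> seminorm_polar \<rho>" and val: "\<And>j. j < N \<Longrightarrow> \<phi> (x j) = \<delta> * sg j"
    using l1_estimate_sign_functional[OF s \<delta> est] by blast
  moreover have "\<phi> (x n) = - \<delta>" if "n \<in> P" for n
    using that N val[of n] by (auto simp: sg_def)
  moreover have "\<phi> (x n) = \<delta>" if "n \<in> M" for n
  proof -
    have "n < N" "n \<notin> P" using that N PM by auto
    with that show ?thesis using val[of n] by (simp add: sg_def)
  qed
  ultimately show "\<exists>\<phi>\<in>seminorm_polar \<rho>. (\<forall>n\<in>P. \<phi> (x n) < - \<delta> / 2) \<and> (\<forall>n\<in>M. \<phi> (x n) > \<delta> / 2)"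
    using \<delta> by (intro bexI[where x = \<phi>]) auto
qed

lemma tvs_bounded_subset: "tvs_bounded B \<Longrightarrow> A \<subseteq> B \<Longrightarrow> tvs_bounded A"
  unfolding tvs_bounded_def by (meson order_trans)

lemma l1_sequence_not_tame_subset:
  assumes lcs: "locally_convex_space TYPE('a::{real_vector,t2_space})"
    and "l1_sequence (x::nat \<Rightarrow> 'a)" and "range x \<subseteq> B"
  shows "\<not> tame_subset B"
proof -
  obtain \<rho> \<delta> where "is_seminorm \<rho>" "continuous_on UNIV \<rho>" "\<delta> > 0"
    and "\<And>n c. \<delta> * (\<Sum>i<n. \<bar>c i\<bar>) \<le> \<rho> (\<Sum>i<n. c i *\<^sub>R x i)"
    using assms(2) unfolding l1_sequence_def by blast
  then have "seminorm_polar \<rho> \<in> eqc" "independent_seq (seminorm_polar \<rho>) (\<lambda>n \<phi>. \<phi> (x n))"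
    using seminorm_polar_in_eqc[OF lcs] l1_estimate_imp_independent_seq by blast+
  moreover have "range (\<lambda>n \<phi>. \<phi> (x n)) \<subseteq> (\<lambda>b \<phi>. \<phi> b) ` B" using assms(3) by blast
  ultimately show ?thesis unfolding tame_subset_def tame_family_def by blast
qed

lemma not_tame_subset_l1_sequence:
  assumes lcs: "locally_convex_space TYPE('a::{real_vector,t2_space})"
    and bounded: "tvs_bounded (B::'a set)" and "\<not> tame_subset B"
  obtains x where "range x \<subseteq> B" "l1_sequence x"
proof -
  obtain K f where K: "K \<in> eqc" and f: "range f \<subseteq> (\<lambda>b \<phi>. \<phi> b) ` B" and ind: "independent_seq K f"
    using assms(2,3) unfolding tame_subset_def tame_family_def by blast
  obtain x where xB: "range x \<subseteq> B" and fx: "f = (\<lambda>n \<phi>. \<phi> (x n))"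
  proof -
    have "\<forall>n. \<exists>y\<in>B. f n = (\<lambda>\<phi>. \<phi> y)" using f by blast
    then obtain x where "\<forall>n. x n \<in> B \<and> f n = (\<lambda>\<phi>. \<phi> (x n))" by metis
    then show ?thesis by (intro that[of x]) auto
  qed
  have "K \<subseteq> top_dual" and equi: "equicontinuous_family K" using K unfolding eqc_def by auto
  then have lin: "\<And>\<phi>. \<phi> \<in> K \<Longrightarrow> linear \<phi>" unfolding top_dual_def by blast
  have "K \<noteq> {}"
    using ind unfolding independent_seq_def by (elim exE conjE allE[of _ "{}"] impE) auto
  let ?\<rho> = "sup_seminorm K"
  have "K \<subseteq> seminorm_polar ?\<rho>"
    using lin abs_le_sup_seminorm[OF lcs lin equi] unfolding seminorm_polar_def by blast
  from independent_seq_imp_l1_estimate[OF this ind[unfolded fx]]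
  obtain \<delta> where "\<delta> > 0" "\<forall>n c. \<delta> * (\<Sum>i<n. \<bar>c i\<bar>) \<le> ?\<rho> (\<Sum>i<n. c i *\<^sub>R x i)"
    by blast
  moreover have "is_seminorm ?\<rho>" "continuous_on UNIV ?\<rho>"
    using is_seminorm_sup_seminorm[OF lcs lin equi \<open>K \<noteq> {}\<close>]
      continuous_on_sup_seminorm[OF lcs lin equi \<open>K \<noteq> {}\<close>] by auto
  moreover have "tvs_bounded (range x)" using tvs_bounded_subset[OF bounded xB] .
  ultimately have "l1_sequence x" unfolding l1_sequence_def by blast
  with xB show ?thesis by (rule that)
qed

theorem theorem6p1:
  assumes "locally_convex_space TYPE('a::{real_vector,t2_space})"
  shows "(\<forall>B::'a set. tvs_bounded B \<longrightarrow>
            (tame_subset B \<longleftrightarrow> \<not> (\<exists>x. range x \<subseteq> B \<and> l1_sequence x))) \<and>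
         (tame_space TYPE('a) \<longleftrightarrow> \<not> (\<exists>x::nat \<Rightarrow> 'a. l1_sequence x))"
proof -
  have subset: "tame_subset B \<longleftrightarrow> \<not> (\<exists>x. range x \<subseteq> B \<and> l1_sequence x)"
    if "tvs_bounded (B::'a set)" for B
    using l1_sequence_not_tame_subset[OF assms] not_tame_subset_l1_sequence[OF assms that] by metis
  have "tame_space TYPE('a) \<longleftrightarrow> \<not> (\<exists>x::nat \<Rightarrow> 'a. l1_sequence x)"
    using subset unfolding tame_space_def l1_sequence_def by blast
  with subset show ?thesis by blast
qed

end
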